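(* The group of units (invertible elements) of the monoid $SB_n$ is equal to the image of the braid group $Br_n$ in $SB_n$, i.e. to the submonoid of $SB_n$ generated by $\sigma_1^{\pm1},\dots,\sigma_{n-1}^{\pm1}$.
   Context: Fix $n\ge 2$. $SB_n$ is the monoid with generators $\sigma_i,\sigma_i^{-1},x_i$ ($i=1,\dots,n-1$) and relations: $\sigma_i\sigma_j=\sigma_j\sigma_i$ and $x_ix_j=x_jx_i$ if $|i-j|>1$; $x_i\sigma_j=\sigma_jx_i$ if $|i-j|\ne1$; $\sigma_i\sigma_{i+1}\sigma_i=\sigma_{i+1}\sigma_i\sigma_{i+1}$; $\sigma_i\sigma_{i+1}x_i=x_{i+1}\sigma_i\sigma_{i+1}$; $\sigma_{i+1}\sigma_ix_{i+1}=x_i\sigma_{i+1}\sigma_i$; $\sigma_i\sigma_i^{-1}=\sigma_i^{-1}\sigma_i=1$. The braid group $Br_n$ (generators $\sigma_i$, Artin relations) maps to $SB_n$ by $\sigma_i\mapsto\sigma_i$. *)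

theory Defs
  imports Main
begin

text \<open>Generators of SB_n: Sg i = sigma_i, Sgi i = sigma_i^{-1}, Xg i = x_i,
  for 1 <= i <= n-1. Elements of SB_n are words modulo the congruence
  generated by the defining relations.\<close>

datatype gen = Sg nat | Sgi nat | Xg nat

type_synonym word = "gen list"

fun gidx :: "gen \<Rightarrow> nat" where
  "gidx (Sg i) = i" | "gidx (Sgi i) = i" | "gidx (Xg i) = i"

definition valid_word :: "nat \<Rightarrow> word \<Rightarrow> bool" where
  "valid_word n w \<longleftrightarrow> (\<forall>a\<in>set w. 1 \<le> gidx a \<and> gidx a \<le> n - 1)"

definition braid_word :: "word \<Rightarrow> bool" where
  "braid_word w \<longleftrightarrow> (\<forall>a\<in>set w. \<exists>i. a = Sg i \<or> a = Sgi i)"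

definition ok :: "nat \<Rightarrow> nat \<Rightarrow> bool" where
  "ok n i \<longleftrightarrow> 1 \<le> i \<and> i \<le> n - 1"

inductive sb_rel :: "nat \<Rightarrow> word \<Rightarrow> word \<Rightarrow> bool" for n where
  ss_comm: "\<lbrakk>ok n i; ok n j; i + 1 < j \<or> j + 1 < i\<rbrakk> \<Longrightarrow> sb_rel n [Sg i, Sg j] [Sg j, Sg i]"
| xx_comm: "\<lbrakk>ok n i; ok n j; i + 1 < j \<or> j + 1 < i\<rbrakk> \<Longrightarrow> sb_rel n [Xg i, Xg j] [Xg j, Xg i]"
| xs_comm: "\<lbrakk>ok n i; ok n j; i \<noteq> j + 1; j \<noteq> i + 1\<rbrakk> \<Longrightarrow> sb_rel n [Xg i, Sg j] [Sg j, Xg i]"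
| braid: "\<lbrakk>ok n i; ok n (i + 1)\<rbrakk> \<Longrightarrow> sb_rel n [Sg i, Sg (i+1), Sg i] [Sg (i+1), Sg i, Sg (i+1)]"
| mixed1: "\<lbrakk>ok n i; ok n (i + 1)\<rbrakk> \<Longrightarrow> sb_rel n [Sg i, Sg (i+1), Xg i] [Xg (i+1), Sg i, Sg (i+1)]"
| mixed2: "\<lbrakk>ok n i; ok n (i + 1)\<rbrakk> \<Longrightarrow> sb_rel n [Sg (i+1), Sg i, Xg (i+1)] [Xg i, Sg (i+1), Sg i]"
| inv1: "ok n i \<Longrightarrow> sb_rel n [Sg i, Sgi i] []"
| inv2: "ok n i \<Longrightarrow> sb_rel n [Sgi i, Sg i] []"

inductive sb_eq :: "nat \<Rightarrow> word \<Rightarrow> word \<Rightarrow> bool" for n where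
  step: "sb_rel n l r \<Longrightarrow> sb_eq n (u @ l @ v) (u @ r @ v)"
| refl: "sb_eq n w w"
| sym: "sb_eq n w v \<Longrightarrow> sb_eq n v w"
| trans: "sb_eq n u v \<Longrightarrow> sb_eq n v w \<Longrightarrow> sb_eq n u w"

definition sb_unit :: "nat \<Rightarrow> word \<Rightarrow> bool" where
  "sb_unit n w \<longleftrightarrow> (\<exists>v. valid_word n v \<and> sb_eq n (w @ v) [] \<and> sb_eq n (v @ w) [])"

end

theory Submission
  imports Defs
begin

text \<open>Every defining relation of SB_n has the same number of letters x_i on both sides, so
  this number is invariant under the congruence and additive under concatenation. If w v = 1
  then w contains no x_i, i.e. it is a braid word. Conversely, a braid word is inverted by
  reversing it and exchanging sigma_i with sigma_i^{-1}, and being a unit is invariant under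
  the congruence.\<close>

fun is_x :: "gen \<Rightarrow> bool" where
  "is_x (Xg i) = True" | "is_x (Sg i) = False" | "is_x (Sgi i) = False"

definition count_x :: "word \<Rightarrow> nat" where
  "count_x w = length (filter is_x w)"

lemma count_x_append [simp]: "count_x (u @ v) = count_x u + count_x v"
  by (simp add: count_x_def)

lemma braid_word_iff_count_x_eq_0: "braid_word w \<longleftrightarrow> count_x w = 0"
proof -
  have "(\<exists>i. a = Sg i \<or> a = Sgi i) \<longleftrightarrow> \<not> is_x a" for a
    by (cases a) auto
  then show ?thesis
    by (simp add: braid_word_def count_x_def filter_empty_conv)
qed

lemma sb_rel_count_x: "sb_rel n l r \<Longrightarrow> count_x l = count_x r"
  by (induction rule: sb_rel.induct) (auto simp: count_x_def)

lemma sb_eq_count_x: "sb_eq n u v \<Longrightarrow> count_x u = count_x v"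
  by (induction rule: sb_eq.induct) (auto dest: sb_rel_count_x)

lemma sb_unit_imp_braid_word:
  assumes "sb_unit n w"
  shows "braid_word w"
proof -
  obtain v where "sb_eq n (w @ v) []"
    using assms by (auto simp: sb_unit_def)
  then have "count_x (w @ v) = count_x []"
    by (rule sb_eq_count_x)
  then show ?thesis
    by (simp add: braid_word_iff_count_x_eq_0 count_x_def)
qed

lemma sb_eq_of_sb_rel: "sb_rel n l r \<Longrightarrow> sb_eq n l r"
  using sb_eq.step[of n l r "[]" "[]"] by simp

lemma sb_eq_append_cong: "sb_eq n u v \<Longrightarrow> sb_eq n (p @ u @ q) (p @ v @ q)"
proof (induction rule: sb_eq.induct)
  case (step l r u v)
  then have "sb_eq n ((p @ u) @ l @ (v @ q)) ((p @ u) @ r @ (v @ q))"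
    by (rule sb_eq.step)
  then show ?case
    by simp
qed (auto intro: sb_eq.refl sb_eq.sym sb_eq.trans)

fun gen_inv :: "gen \<Rightarrow> gen" where
  "gen_inv (Sg i) = Sgi i" | "gen_inv (Sgi i) = Sg i" | "gen_inv (Xg i) = Xg i"

definition word_inv :: "word \<Rightarrow> word" where
  "word_inv w = rev (map gen_inv w)"

lemma gen_inv_gen_inv [simp]: "gen_inv (gen_inv a) = a"
  by (cases a) auto

lemma gidx_gen_inv [simp]: "gidx (gen_inv a) = gidx a"
  by (cases a) auto

lemma word_inv_word_inv [simp]: "word_inv (word_inv w) = w"
  by (simp add: word_inv_def rev_map comp_def)

lemma valid_word_word_inv: "valid_word n w \<Longrightarrow> valid_word n (word_inv w)"
  by (simp add: valid_word_def word_inv_def)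

lemma braid_word_word_inv: "braid_word w \<Longrightarrow> braid_word (word_inv w)"
  unfolding braid_word_def word_inv_def by fastforce

lemma sb_eq_braid_letter_inv:
  assumes "ok n i" and "a = Sg i \<or> a = Sgi i"
  shows "sb_eq n [a, gen_inv a] []"
  using assms sb_eq_of_sb_rel[OF sb_rel.inv1] sb_eq_of_sb_rel[OF sb_rel.inv2] by auto

lemma sb_eq_braid_word_right_inv:
  assumes "valid_word n u" and "braid_word u"
  shows "sb_eq n (u @ word_inv u) []"
  using assms
proof (induction u)
  case Nil
  then show ?case
    by (simp add: word_inv_def sb_eq.refl)
next
  case (Cons a u)
  then have IH: "sb_eq n (u @ word_inv u) []"
    by (simp add: valid_word_def braid_word_def)
  obtain i where "ok n i" "a = Sg i \<or> a = Sgi i"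
    using Cons.prems by (auto simp: valid_word_def braid_word_def ok_def)
  then have letter: "sb_eq n [a, gen_inv a] []"
    by (rule sb_eq_braid_letter_inv)
  have "(a # u) @ word_inv (a # u) = [a] @ (u @ word_inv u) @ [gen_inv a]"
    by (simp add: word_inv_def)
  moreover have "sb_eq n ([a] @ (u @ word_inv u) @ [gen_inv a]) [a, gen_inv a]"
    using sb_eq_append_cong[OF IH, of "[a]" "[gen_inv a]"] by simp
  ultimately show ?case
    using letter by (auto intro: sb_eq.trans)
qed

lemma sb_unit_braid_word:
  assumes "valid_word n u" and "braid_word u"
  shows "sb_unit n u"
proof -
  have "sb_eq n (u @ word_inv u) []"
    using assms by (rule sb_eq_braid_word_right_inv)
  moreover have "sb_eq n (word_inv u @ u) []"
    using sb_eq_braid_word_right_inv[of n "word_inv u"] assms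
    by (simp add: valid_word_word_inv braid_word_word_inv)
  ultimately show ?thesis
    using valid_word_word_inv[OF assms(1)] by (auto simp: sb_unit_def)
qed

lemma sb_unit_sb_eq:
  assumes "sb_eq n w u" and "sb_unit n u"
  shows "sb_unit n w"
proof -
  obtain v where v: "valid_word n v" "sb_eq n (u @ v) []" "sb_eq n (v @ u) []"
    using assms(2) by (auto simp: sb_unit_def)
  have "sb_eq n (w @ v) (u @ v)" "sb_eq n (v @ w) (v @ u)"
    using sb_eq_append_cong[OF assms(1), of "[]" v] sb_eq_append_cong[OF assms(1), of v "[]"]
    by simp_all
  with v show ?thesis
    by (auto simp: sb_unit_def intro: sb_eq.trans)
qed

theorem proposition3p1:
  fixes n :: nat and w :: word
  assumes "n \<ge> 2" and "valid_word n w"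
  shows "sb_unit n w \<longleftrightarrow> (\<exists>u. valid_word n u \<and> braid_word u \<and> sb_eq n w u)"
proof
  assume "sb_unit n w"
  then have "braid_word w"
    by (rule sb_unit_imp_braid_word)
  then show "\<exists>u. valid_word n u \<and> braid_word u \<and> sb_eq n w u"
    using assms(2) sb_eq.refl by blast
next
  assume "\<exists>u. valid_word n u \<and> braid_word u \<and> sb_eq n w u"
  then show "sb_unit n w"
    using sb_unit_braid_word sb_unit_sb_eq by blast
qed

end
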